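(* Let $\vec r\in\mathbb Z^n$. For every $\sigma,\tau\in H_{\vec r}$, $$\varphi_{\vec r}(\sigma)\varphi_{\vec r}(\tau)=\varphi_{\vec r}(\sigma\tau)\,\psi_{\vec r}(\sigma,\tau).$$ Consequently, the restriction of $\psi_{\vec r}$ to $H_{\vec r}\times H_{\vec r}$ is a 2-cocycle on $H_{\vec r}$ with values in $\mathbb T$.
   Context: $n\ge2$, $\theta\in M_n(\mathbb R)$ skew-symmetric, $\omega_{ij}=e^{2\pi i\theta_{ij}}$. $S_n$ acts on $\mathbb Z^n$ by $\sigma\vec r=(r_{\sigma^{-1}(1)},\dots,r_{\sigma^{-1}(n)})$; $H_{\vec r}=\{\sigma\in S_n:\sigma\vec r=\vec r\}$. For $\sigma,\tau\in S_n$: $\vartheta_{\vec r}(\sigma,\tau)=\prod_{i<j,\ \sigma(i)>\sigma(j)}(\omega_{\tau^{-1}(j),\tau^{-1}(i)})^{r_{\sigma(i)}r_{\sigma(j)}}$; $\psi_{\vec r}(\sigma,\tau)=\overline{\vartheta_{\vec r}(\sigma,e)}\,\vartheta_{\vec r}(\sigma,\tau)$ ($e$ the identity permutation); $\varphi_{\vec r}(\sigma)=\overline{\vartheta_{\vec r}(\sigma,e)}$ for $\sigma\in H_{\vec r}$. A 2-cocycle on a group $G$ with values in an abelian group is a function $\psi:G\times G\to A$ with $\psi(g,e)=\psi(e,g)=1$ and $\psi(g,h)\psi(gh,k)=\psi(g,hk)\psi(h,k)$ for all $g,h,k$. *)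

theory Defs
  imports Complex_Main "HOL-Combinatorics.Permutations" "HOL-Algebra.Group"
begin

text \<open>Indices run over {1..n}; permutations are bijections permuting {1..n}.\<close>

definition omega :: "(nat \<Rightarrow> nat \<Rightarrow> real) \<Rightarrow> nat \<Rightarrow> nat \<Rightarrow> complex" where
  "omega \<theta> i j = exp (2 * complex_of_real pi * imaginary_unit * complex_of_real (\<theta> i j))"

definition perm_act :: "(nat \<Rightarrow> nat) \<Rightarrow> (nat \<Rightarrow> int) \<Rightarrow> (nat \<Rightarrow> int)" where
  "perm_act \<sigma> r = (\<lambda>i. r (inv_into UNIV \<sigma> i))"

definition Hr :: "nat \<Rightarrow> (nat \<Rightarrow> int) \<Rightarrow> (nat \<Rightarrow> nat) set" where
  "Hr n r = {\<sigma>. \<sigma> permutes {1..n} \<and> (\<forall>i\<in>{1..n}. perm_act \<sigma> r i = r i)}"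

definition vartheta :: "nat \<Rightarrow> (nat \<Rightarrow> nat \<Rightarrow> real) \<Rightarrow> (nat \<Rightarrow> int)
    \<Rightarrow> (nat \<Rightarrow> nat) \<Rightarrow> (nat \<Rightarrow> nat) \<Rightarrow> complex" where
  "vartheta n \<theta> r \<sigma> \<tau> =
     (\<Prod>(i,j)\<in>{(i,j). i \<in> {1..n} \<and> j \<in> {1..n} \<and> i < j \<and> \<sigma> i > \<sigma> j}.
        (omega \<theta> (inv_into UNIV \<tau> j) (inv_into UNIV \<tau> i)) powi (r (\<sigma> i) * r (\<sigma> j)))"

definition psi :: "nat \<Rightarrow> (nat \<Rightarrow> nat \<Rightarrow> real) \<Rightarrow> (nat \<Rightarrow> int)
    \<Rightarrow> (nat \<Rightarrow> nat) \<Rightarrow> (nat \<Rightarrow> nat) \<Rightarrow> complex" where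
  "psi n \<theta> r \<sigma> \<tau> = cnj (vartheta n \<theta> r \<sigma> id) * vartheta n \<theta> r \<sigma> \<tau>"

definition phi :: "nat \<Rightarrow> (nat \<Rightarrow> nat \<Rightarrow> real) \<Rightarrow> (nat \<Rightarrow> int)
    \<Rightarrow> (nat \<Rightarrow> nat) \<Rightarrow> complex" where
  "phi n \<theta> r \<sigma> = cnj (vartheta n \<theta> r \<sigma> id)"

definition Hr_group :: "nat \<Rightarrow> (nat \<Rightarrow> int) \<Rightarrow> (nat \<Rightarrow> nat) monoid" where
  "Hr_group n r = \<lparr>carrier = Hr n r, mult = (\<circ>), one = id\<rparr>"

definition two_cocycle :: "('a, 'b) monoid_scheme \<Rightarrow> complex set \<Rightarrow> ('a \<Rightarrow> 'a \<Rightarrow> complex) \<Rightarrow> bool" where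
  "two_cocycle G A \<psi> \<longleftrightarrow> group G
     \<and> (\<forall>g\<in>carrier G. \<forall>h\<in>carrier G. \<psi> g h \<in> A)
     \<and> (\<forall>g\<in>carrier G. \<psi> g \<one>\<^bsub>G\<^esub> = 1 \<and> \<psi> \<one>\<^bsub>G\<^esub> g = 1)
     \<and> (\<forall>g\<in>carrier G. \<forall>h\<in>carrier G. \<forall>k\<in>carrier G.
          \<psi> g h * \<psi> (g \<otimes>\<^bsub>G\<^esub> h) k = \<psi> g (h \<otimes>\<^bsub>G\<^esub> k) * \<psi> h k)"

definition circle_T :: "complex set" where
  "circle_T = {z. cmod z = 1}"

end

theory Submission
  imports Defs "HOL-Algebra.Sym_Groups"
begin

text \<open>
  For \<sigma> \<in> H_r the exponents r_{\<sigma>(i)} r_{\<sigma>(j)} equal r_i r_j, so \<vartheta>_r(\<sigma>,\<tau>) is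
  e^{2\<pi>i s} with s the sum of a skew weight over the inversions of \<sigma>. For a skew weight
  the inversion sum of \<pi> is half the difference of the sums over the pairs that \<pi>,
  respectively the identity, put in decreasing order; reindexing along \<tau> then gives
  \<vartheta>_r(\<sigma>\<tau>, e) = \<vartheta>_r(\<tau>, e) \<vartheta>_r(\<sigma>, \<tau>). Hence \<psi>_r(\<sigma>,\<tau>) = \<phi>(\<sigma>) \<phi>(\<tau>) / \<phi>(\<sigma>\<tau>) on H_r,
  and such a coboundary of a unimodular function is a normalised 2-cocycle.
\<close>

definition inversion_sum :: "'a::linorder set \<Rightarrow> ('a \<Rightarrow> 'a \<Rightarrow> real) \<Rightarrow> ('a \<Rightarrow> 'a) \<Rightarrow> real" where
  "inversion_sum A H \<pi> = (\<Sum>(i,j)\<in>{(i,j). i \<in> A \<and> j \<in> A \<and> i < j \<and> \<pi> j < \<pi> i}. H i j)"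

definition descent_sum :: "'a::linorder set \<Rightarrow> ('a \<Rightarrow> 'a \<Rightarrow> real) \<Rightarrow> ('a \<Rightarrow> 'a) \<Rightarrow> real" where
  "descent_sum A H \<pi> = (\<Sum>i\<in>A. \<Sum>j\<in>A. if \<pi> j < \<pi> i then H i j else 0)"

lemma sum_pairs_filter:
  assumes "finite A"
  shows "(\<Sum>(i,j)\<in>{(i,j). i \<in> A \<and> j \<in> A \<and> P i j}. f i j) =
         (\<Sum>i\<in>A. \<Sum>j\<in>A. if P i j then f i j else (0::'b::comm_monoid_add))"
proof -
  have "{(i,j). i \<in> A \<and> j \<in> A \<and> P i j} = {x \<in> A \<times> A. P (fst x) (snd x)}" by auto
  then show ?thesis
    using assms by (simp add: sum.inter_filter sum.cartesian_product case_prod_beta)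
qed

lemma inversion_sum_double:
  assumes "finite A" and "\<pi> permutes A" and skew: "\<forall>i\<in>A. \<forall>j\<in>A. H j i = - H i j"
  shows "2 * inversion_sum A H \<pi> = descent_sum A H \<pi> - descent_sum A H id"
proof -
  let ?inv = "\<lambda>i j. if i < j \<and> \<pi> j < \<pi> i then H i j else 0"
  let ?anti = "\<lambda>i j. if j < i \<and> \<pi> i < \<pi> j then H i j else 0"
  have inv_sum: "inversion_sum A H \<pi> = (\<Sum>i\<in>A. \<Sum>j\<in>A. ?inv i j)"
    unfolding inversion_sum_def using assms(1) by (rule sum_pairs_filter)
  \<comment> \<open>Swapping the summation order turns the inversions of \<pi> into its non-inversions
      among the pairs with j < i, weighted by -H i j.\<close>
  have "(\<Sum>i\<in>A. \<Sum>j\<in>A. ?inv i j) = (\<Sum>i\<in>A. \<Sum>j\<in>A. ?inv j i)"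
    by (rule sum.swap)
  also have "\<dots> = (\<Sum>i\<in>A. \<Sum>j\<in>A. - ?anti i j)"
  proof (intro sum.cong refl)
    fix i j assume "i \<in> A" "j \<in> A"
    then have "H j i = - H i j" using skew by blast
    then show "?inv j i = - ?anti i j" by simp
  qed
  finally have swapped: "(\<Sum>i\<in>A. \<Sum>j\<in>A. ?inv i j) = - (\<Sum>i\<in>A. \<Sum>j\<in>A. ?anti i j)"
    by (simp add: sum_negf)
  have pointwise: "?inv i j - ?anti i j =
      (if \<pi> j < \<pi> i then H i j else 0) - (if j < i then H i j else 0)" for i j
  proof (cases "i = j")
    case False
    then have "\<pi> i \<noteq> \<pi> j" using permutes_inj[OF assms(2)] by (auto dest: injD)
    with False show ?thesis by (cases "i < j"; cases "\<pi> i < \<pi> j") auto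
  qed simp
  have "2 * inversion_sum A H \<pi> = (\<Sum>i\<in>A. \<Sum>j\<in>A. ?inv i j) - (\<Sum>i\<in>A. \<Sum>j\<in>A. ?anti i j)"
    using swapped unfolding inv_sum by linarith
  also have "\<dots> = descent_sum A H \<pi> - descent_sum A H id"
    unfolding descent_sum_def sum_subtractf[symmetric] pointwise by simp
  finally show ?thesis .
qed

lemma descent_sum_comp:
  assumes "\<tau> permutes A"
  shows "descent_sum A (\<lambda>i j. H (inv' \<tau> i) (inv' \<tau> j)) \<sigma> = descent_sum A H (\<sigma> \<circ> \<tau>)"
proof -
  have bij: "bij_betw \<tau> A A" using assms by (rule permutes_imp_bij)
  have reindex: "(\<Sum>a\<in>A. \<Sum>b\<in>A. g a b) = (\<Sum>i\<in>A. \<Sum>j\<in>A. g (\<tau> i) (\<tau> j))"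
    for g :: "_ \<Rightarrow> _ \<Rightarrow> real"
    using sum.reindex_bij_betw[OF bij, of "\<lambda>a. \<Sum>b\<in>A. g a b"]
      sum.reindex_bij_betw[OF bij, of "g (\<tau> _)"] by simp
  show ?thesis
    unfolding descent_sum_def by (subst reindex) (simp add: permutes_inverses(2)[OF assms] cong: if_cong)
qed

lemma inversion_sum_comp:
  assumes "finite A" and \<sigma>: "\<sigma> permutes A" and \<tau>: "\<tau> permutes A"
    and skew: "\<forall>i\<in>A. \<forall>j\<in>A. H j i = - H i j"
  shows "inversion_sum A H (\<sigma> \<circ> \<tau>) =
         inversion_sum A H \<tau> + inversion_sum A (\<lambda>i j. H (inv' \<tau> i) (inv' \<tau> j)) \<sigma>"
proof -
  have "\<forall>i\<in>A. \<forall>j\<in>A. H (inv' \<tau> j) (inv' \<tau> i) = - H (inv' \<tau> i) (inv' \<tau> j)"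
    using skew permutes_in_image[OF permutes_inv[OF \<tau>]] by blast
  from inversion_sum_double[OF assms(1) \<sigma> this] inversion_sum_double[OF assms(1) \<tau> skew]
    inversion_sum_double[OF assms(1) permutes_compose[OF \<tau> \<sigma>] skew]
  show ?thesis unfolding descent_sum_comp[OF \<tau>] by simp
qed

lemma mem_Hr_iff: "\<sigma> \<in> Hr n r \<longleftrightarrow> \<sigma> permutes {1..n} \<and> (\<forall>i. r (\<sigma> i) = r i)"
proof -
  have "(\<forall>i\<in>{1..n}. r (inv' \<sigma> i) = r i) \<longleftrightarrow> (\<forall>i. r (\<sigma> i) = r i)" if p: "\<sigma> permutes {1..n}"
  proof -
    have "(\<forall>i\<in>{1..n}. r (inv' \<sigma> i) = r i) \<longleftrightarrow> (\<forall>i. r (inv' \<sigma> i) = r i)"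
      using permutes_not_in[OF permutes_inv[OF p]] by auto
    also have "\<dots> \<longleftrightarrow> (\<forall>i. r (\<sigma> i) = r i)"
      by (metis p permutes_inverses)
    finally show ?thesis .
  qed
  then show ?thesis by (auto simp: Hr_def perm_act_def)
qed

lemma comp_mem_Hr: "\<sigma> \<in> Hr n r \<Longrightarrow> \<tau> \<in> Hr n r \<Longrightarrow> \<sigma> \<circ> \<tau> \<in> Hr n r"
  by (simp add: mem_Hr_iff permutes_compose)

lemma Hr_subgroup: "subgroup (Hr n r) (sym_group n)"
proof (rule group.subgroupI[OF sym_group_is_group])
  show "Hr n r \<subseteq> carrier (sym_group n)"
    by (auto simp: mem_Hr_iff sym_group_carrier)
  have "id \<in> Hr n r"
    by (simp add: mem_Hr_iff permutes_id)
  then show "Hr n r \<noteq> {}" by blast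
  fix \<sigma> \<tau> assume \<sigma>: "\<sigma> \<in> Hr n r" and \<tau>: "\<tau> \<in> Hr n r"
  then show "\<sigma> \<otimes>\<^bsub>sym_group n\<^esub> \<tau> \<in> Hr n r"
    by (simp add: sym_group_mult comp_mem_Hr)
  from \<sigma> show "inv\<^bsub>sym_group n\<^esub> \<sigma> \<in> Hr n r"
    by (simp add: mem_Hr_iff sym_group_carrier permutes_inv) (metis permutes_inverses(1))
qed

lemma group_Hr_group: "group (Hr_group n r)"
proof -
  have "Hr_group n r = (sym_group n)\<lparr>carrier := Hr n r\<rparr>"
    by (simp add: Hr_group_def sym_group_def)
  then show ?thesis
    using group.subgroup_imp_group[OF sym_group_is_group Hr_subgroup] by simp
qed

lemma prod_cis: "(\<Prod>x\<in>A. cis (f x)) = cis (\<Sum>x\<in>A. f x)"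
  by (induction A rule: infinite_finite_induct) (simp_all add: cis_mult)

lemma omega_eq_cis: "omega \<theta> i j = cis (2 * pi * \<theta> i j)"
  by (simp add: omega_def cis_conv_exp mult_ac)

lemma omega_powi: "omega \<theta> i j powi k = cis (2 * pi * (\<theta> i j * of_int k))"
  by (simp add: omega_eq_cis cis_power_int mult_ac)

lemma vartheta_eq_cis:
  assumes "\<sigma> \<in> Hr n r"
  shows "vartheta n \<theta> r \<sigma> \<tau> = cis (2 * pi *
           inversion_sum {1..n} (\<lambda>i j. \<theta> (inv' \<tau> j) (inv' \<tau> i) * of_int (r i * r j)) \<sigma>)"
  using assms
  by (simp add: vartheta_def inversion_sum_def omega_powi prod_cis case_prod_beta
                sum_distrib_left mem_Hr_iff)

lemma norm_vartheta: "\<sigma> \<in> Hr n r \<Longrightarrow> cmod (vartheta n \<theta> r \<sigma> \<tau>) = 1"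
  by (simp add: vartheta_eq_cis)

lemma vartheta_id: "vartheta n \<theta> r id \<tau> = 1"
  by (auto simp: vartheta_def intro: prod.neutral)

lemma vartheta_comp:
  assumes \<sigma>: "\<sigma> \<in> Hr n r" and \<tau>: "\<tau> \<in> Hr n r"
    and skew: "\<forall>i\<in>{1..n}. \<forall>j\<in>{1..n}. \<theta> i j = - \<theta> j i"
  shows "vartheta n \<theta> r (\<sigma> \<circ> \<tau>) id = vartheta n \<theta> r \<tau> id * vartheta n \<theta> r \<sigma> \<tau>"
proof -
  define H where "H i j = \<theta> j i * of_int (r i * r j)" for i j
  have \<sigma>p: "\<sigma> permutes {1..n}" and \<tau>p: "\<tau> permutes {1..n}"
    using \<sigma> \<tau> by (auto simp: mem_Hr_iff)
  have vartheta_id_H: "vartheta n \<theta> r \<pi> id = cis (2 * pi * inversion_sum {1..n} H \<pi>)"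
    if "\<pi> \<in> Hr n r" for \<pi>
    using vartheta_eq_cis[OF that, of \<theta> id] by (simp add: inv_id H_def[abs_def])
  have "r (inv' \<tau> i) = r i" for i
    using \<tau> by (metis mem_Hr_iff permutes_inverses(1))
  then have vartheta_\<tau>: "vartheta n \<theta> r \<sigma> \<tau> =
      cis (2 * pi * inversion_sum {1..n} (\<lambda>i j. H (inv' \<tau> i) (inv' \<tau> j)) \<sigma>)"
    using vartheta_eq_cis[OF \<sigma>, of \<theta> \<tau>] by (simp add: H_def)
  have "\<forall>i\<in>{1..n}. \<forall>j\<in>{1..n}. H j i = - H i j"
  proof (intro ballI)
    fix i j assume "i \<in> {1..n}" "j \<in> {1..n}"
    then have "\<theta> i j = - \<theta> j i" using skew by blast
    then show "H j i = - H i j" by (simp add: H_def mult.commute)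
  qed
  from inversion_sum_comp[OF _ \<sigma>p \<tau>p this] show ?thesis
    by (simp add: vartheta_id_H comp_mem_Hr[OF \<sigma> \<tau>] \<tau> vartheta_\<tau> cis_mult distrib_left)
qed

lemma mult_cnj_unimodular: "cmod z = 1 \<Longrightarrow> z * cnj z = 1"
  by (simp flip: complex_norm_square)

lemma two_cocycle_coboundary:
  assumes G: "group G" and unit: "\<forall>g\<in>carrier G. cmod (f g) = 1" and "f \<one>\<^bsub>G\<^esub> = 1"
    and \<psi>: "\<forall>g\<in>carrier G. \<forall>h\<in>carrier G. \<psi> g h = f g * f h * cnj (f (g \<otimes>\<^bsub>G\<^esub> h))"
  shows "two_cocycle G circle_T \<psi>"
  unfolding two_cocycle_def circle_T_def
proof (intro conjI ballI CollectI)
  fix g h k assume g: "g \<in> carrier G" and h: "h \<in> carrier G" and k: "k \<in> carrier G"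
  show "cmod (\<psi> g h) = 1"
    using g h unit \<psi> G by (simp add: norm_mult group.is_monoid monoid.m_closed)
  show "\<psi> g \<one>\<^bsub>G\<^esub> = 1" "\<psi> \<one>\<^bsub>G\<^esub> g = 1"
    using g unit \<psi> \<open>f \<one>\<^bsub>G\<^esub> = 1\<close> G
    by (simp_all add: group.is_monoid monoid.one_closed mult_cnj_unimodular)
  have "f (g \<otimes>\<^bsub>G\<^esub> h) * cnj (f (g \<otimes>\<^bsub>G\<^esub> h)) = 1" "f (h \<otimes>\<^bsub>G\<^esub> k) * cnj (f (h \<otimes>\<^bsub>G\<^esub> k)) = 1"
    using g h k unit G by (simp_all add: mult_cnj_unimodular group.is_monoid monoid.m_closed)
  then show "\<psi> g h * \<psi> (g \<otimes>\<^bsub>G\<^esub> h) k = \<psi> g (h \<otimes>\<^bsub>G\<^esub> k) * \<psi> h k"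
    using g h k \<psi> G
    by (simp add: group.is_monoid monoid.m_closed monoid.m_assoc)
       (simp add: algebra_simps)
qed (use G in simp)

lemma psi_eq_coboundary:
  assumes "\<sigma> \<in> Hr n r" and "\<tau> \<in> Hr n r"
    and "\<forall>i\<in>{1..n}. \<forall>j\<in>{1..n}. \<theta> i j = - \<theta> j i"
  shows "psi n \<theta> r \<sigma> \<tau> = phi n \<theta> r \<sigma> * phi n \<theta> r \<tau> * cnj (phi n \<theta> r (\<sigma> \<circ> \<tau>))"
  using mult_cnj_unimodular[OF norm_vartheta[OF assms(2)], of \<theta> id]
  by (simp add: psi_def phi_def vartheta_comp[OF assms] algebra_simps)

theorem proposition4p11:
  fixes n :: nat and \<theta> :: "nat \<Rightarrow> nat \<Rightarrow> real" and r :: "nat \<Rightarrow> int"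
  assumes "n \<ge> 2"
    and "\<forall>i\<in>{1..n}. \<forall>j\<in>{1..n}. \<theta> i j = - \<theta> j i"
  shows "(\<forall>\<sigma>\<in>Hr n r. \<forall>\<tau>\<in>Hr n r.
            phi n \<theta> r \<sigma> * phi n \<theta> r \<tau> = phi n \<theta> r (\<sigma> \<circ> \<tau>) * psi n \<theta> r \<sigma> \<tau>)
         \<and> two_cocycle (Hr_group n r) circle_T (psi n \<theta> r)"
proof
  have norm_phi: "cmod (phi n \<theta> r \<sigma>) = 1" if "\<sigma> \<in> Hr n r" for \<sigma>
    using norm_vartheta[OF that] by (simp add: phi_def)
  show "two_cocycle (Hr_group n r) circle_T (psi n \<theta> r)"
  proof (rule two_cocycle_coboundary[where f = "phi n \<theta> r"])
    show "group (Hr_group n r)" by (rule group_Hr_group)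
  qed (simp_all add: Hr_group_def phi_def norm_vartheta vartheta_id psi_eq_coboundary[OF _ _ assms(2)])
  show "\<forall>\<sigma>\<in>Hr n r. \<forall>\<tau>\<in>Hr n r.
          phi n \<theta> r \<sigma> * phi n \<theta> r \<tau> = phi n \<theta> r (\<sigma> \<circ> \<tau>) * psi n \<theta> r \<sigma> \<tau>"
  proof (intro ballI)
    fix \<sigma> \<tau> assume \<sigma>: "\<sigma> \<in> Hr n r" and \<tau>: "\<tau> \<in> Hr n r"
    then have "phi n \<theta> r (\<sigma> \<circ> \<tau>) * cnj (phi n \<theta> r (\<sigma> \<circ> \<tau>)) = 1"
      by (simp add: mult_cnj_unimodular norm_phi comp_mem_Hr)
    then show "phi n \<theta> r \<sigma> * phi n \<theta> r \<tau> = phi n \<theta> r (\<sigma> \<circ> \<tau>) * psi n \<theta> r \<sigma> \<tau>"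
      by (simp add: psi_eq_coboundary[OF \<sigma> \<tau> assms(2)] algebra_simps)
  qed
qed

end
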